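(* Let $L\in\mathbb R^{N\times N}$ be symmetric positive semidefinite with eigenvalues $\lambda_1\le\cdots\le\lambda_N$ and orthonormal eigenvectors $u_1,\dots,u_N$. Let $P\in\mathbb R^{n\times N}$ have full row rank, $P^+$ its Moore–Penrose pseudoinverse, $\Pi=P^+P$, $\Pi^\perp = I-\Pi$, and $L_c = (P^+)^\top LP^+$. Let $i$ be an index with $\lambda_i>0$ and $\mathbf U_i=\mathrm{span}(u_1,\dots,u_i)$. If $L$ and $L_c$ are $(\mathbf U_i,\epsilon_i)$-similar, then $\|\Pi^\perp u_i\|_2^2\le\epsilon_i$.
   Context: For PSD $M$, $\|y\|_M=\sqrt{y^\top My}$. $L_c$ and $L$ are $(\mathbf R,\epsilon)$-similar if $\epsilon\ge0$ and $\|x-P^+Px\|_L\le\epsilon\|x\|_L$ for all $x\in\mathbf R$. *)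

theory Defs
  imports "HOL-Analysis.Analysis"
begin

definition pinv :: "real^'a^'b \<Rightarrow> real^'b^'a" where
  "pinv A = (THE X. A ** X ** A = A \<and> X ** A ** X = X \<and>
                    transpose (A ** X) = A ** X \<and> transpose (X ** A) = X ** A)"

definition Mnorm :: "real^'n^'n \<Rightarrow> real^'n \<Rightarrow> real" where
  "Mnorm M y = sqrt (y \<bullet> (M *v y))"

text \<open>(R,eps)-similarity of Lc and L (w.r.t. the reduction matrix P).
  As in the paper, Lc is a parameter but only P and L enter the condition.\<close>
definition rsimilar ::
  "real^'N^'N \<Rightarrow> real^'n^'n \<Rightarrow> real^'N^'n \<Rightarrow> (real^'N) set \<Rightarrow> real \<Rightarrow> bool" where
  "rsimilar L Lc P R eps \<longleftrightarrow> eps \<ge> 0 \<and>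
     (\<forall>x\<in>R. Mnorm L (x - (pinv P ** P) *v x) \<le> eps * Mnorm L x)"

end

theory Submission
  imports Defs
begin

text \<open>With \<open>v = u\<^sub>i\<close> and \<open>x = \<Pi>\<^sup>\<perp> v\<close>, the orthogonal projection \<open>\<Pi>\<^sup>\<perp>\<close> gives
  \<open>\<parallel>x\<parallel>\<^sup>2 = \<langle>x, v\<rangle> =: s\<close>, and since \<open>v\<close> is a \<open>\<lambda>\<^sub>i\<close>-eigenvector, \<open>\<langle>v, L x\<rangle> = \<lambda>\<^sub>i s\<close>.
  Cauchy--Schwarz for the semi-inner product of \<open>L\<close> yields
  \<open>(\<lambda>\<^sub>i s)\<^sup>2 \<le> \<parallel>v\<parallel>\<^sub>L\<^sup>2 \<parallel>x\<parallel>\<^sub>L\<^sup>2 = \<lambda>\<^sub>i \<parallel>x\<parallel>\<^sub>L\<^sup>2\<close>, while similarity applied to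
  \<open>v \<in> \<^bold>U\<^sub>i\<close> gives \<open>\<parallel>x\<parallel>\<^sub>L\<^sup>2 \<le> \<epsilon>\<^sub>i\<^sup>2 \<lambda>\<^sub>i\<close>. Hence \<open>s\<^sup>2 \<le> \<epsilon>\<^sub>i\<^sup>2\<close> as \<open>\<lambda>\<^sub>i > 0\<close>.
  For full row rank \<open>P\<close> the pseudoinverse is \<open>P\<^sup>T (P P\<^sup>T)\<^sup>-\<^sup>1\<close>.\<close>

lemma inner_matrix_vector_transpose:
  "((A::real^'a^'b) *v x) \<bullet> y = x \<bullet> (transpose A *v y)"
  by (metis dot_lmul_matrix vector_transpose_matrix)

definition penrose :: "real^'a^'b \<Rightarrow> real^'b^'a \<Rightarrow> bool" where
  "penrose A X \<longleftrightarrow> A ** X ** A = A \<and> X ** A ** X = X \<and>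
     transpose (A ** X) = A ** X \<and> transpose (X ** A) = X ** A"

lemma pinv_def_penrose: "pinv A = (THE X. penrose A X)"
  unfolding pinv_def penrose_def ..

lemma penrose_unique:
  assumes X: "penrose A X" and Y: "penrose A Y"
  shows "X = Y"
proof -
  have "X = X ** transpose X ** transpose A"
    using X unfolding penrose_def by (metis matrix_mul_assoc matrix_transpose_mul)
  also have "\<dots> = X ** transpose X ** transpose A ** transpose Y ** transpose A"
    using Y unfolding penrose_def by (metis matrix_mul_assoc matrix_transpose_mul)
  also have "\<dots> = X ** A ** Y"
    using X Y unfolding penrose_def by (metis matrix_mul_assoc matrix_transpose_mul)
  also have "\<dots> = transpose A ** transpose X ** transpose A ** transpose Y ** Y"
    using X Y unfolding penrose_def by (metis matrix_mul_assoc matrix_transpose_mul)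
  also have "\<dots> = transpose A ** transpose Y ** Y"
    using X unfolding penrose_def by (metis matrix_mul_assoc matrix_transpose_mul)
  also have "\<dots> = Y"
    using Y unfolding penrose_def by (metis matrix_transpose_mul)
  finally show ?thesis .
qed

lemma penrose_pinv: "penrose A X \<Longrightarrow> penrose A (pinv A)"
  unfolding pinv_def_penrose by (rule theI) (auto intro: penrose_unique)

lemma gram_matrix_invertible:
  fixes P :: "real^'N^'n"
  assumes "rank P = CARD('n)"
  shows "\<exists>B. (P ** transpose P) ** B = mat 1 \<and> transpose B = B"
proof -
  let ?Q = "P ** transpose P"
  have inj_PT: "inj ((*v) (transpose P))"
    using assms by (metis full_rank_injective rank_transpose)
  have "inj ((*v) ?Q)"
  proof (rule linear_injective_0[THEN iffD2, OF matrix_vector_mul_linear], intro allI impI)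
    fix y assume "?Q *v y = 0"
    then have "(transpose P *v y) \<bullet> (transpose P *v y) = 0"
      by (metis inner_matrix_vector_transpose inner_zero_right matrix_vector_mul_assoc
          transpose_transpose)
    then show "y = 0"
      using inj_PT by (metis inj_eq inner_eq_zero_iff matrix_vector_mult_0_right)
  qed
  then obtain B where BQ: "B ** ?Q = mat 1"
    using matrix_left_invertible_injective by blast
  then have QB: "?Q ** B = mat 1"
    using matrix_left_right_inverse by blast
  have "transpose B = transpose B ** (?Q ** B)"
    using QB by simp
  also have "\<dots> = B"
    using QB by (metis matrix_mul_assoc matrix_mul_lid matrix_transpose_mul transpose_mat
        transpose_transpose)
  finally show ?thesis
    using QB by blast
qed

lemma penrose_full_row_rank:
  fixes P :: "real^'N^'n"
  assumes "rank P = CARD('n)"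
  shows "penrose P (pinv P)"
proof -
  obtain B where QB: "(P ** transpose P) ** B = mat 1" and B: "transpose B = B"
    using gram_matrix_invertible[OF assms] by blast
  let ?X = "transpose P ** B"
  have PX: "P ** ?X = mat 1"
    using QB by (simp add: matrix_mul_assoc)
  moreover have "transpose (?X ** P) = ?X ** P"
    using B by (simp add: matrix_transpose_mul matrix_mul_assoc)
  ultimately have "penrose P ?X"
    unfolding penrose_def by (simp add: matrix_mul_assoc[symmetric])
  then show ?thesis
    by (rule penrose_pinv)
qed

lemma matrix_diff_rdistrib: "((A::'a::ring_1^'n^'m) - B) ** C = A ** C - B ** C"
  by (simp add: matrix_matrix_mult_def vec_eq_iff sum_subtractf left_diff_distrib)

lemma matrix_diff_ldistrib: "(A::'a::ring_1^'n^'m) ** (B - C) = A ** B - A ** C"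
  by (simp add: matrix_matrix_mult_def vec_eq_iff sum_subtractf right_diff_distrib)

lemma transpose_diff: "transpose ((A::'a::ab_group_add^'n^'m) - B) = transpose A - transpose B"
  by (simp add: transpose_def vec_eq_iff)

lemma penrose_complement_projection:
  assumes "penrose A X"
  shows "transpose (mat 1 - X ** A) = mat 1 - X ** A"
    and "(mat 1 - X ** A) ** (mat 1 - X ** A) = mat 1 - X ** A"
proof -
  have "(X ** A) ** (X ** A) = X ** A"
    using assms unfolding penrose_def by (metis matrix_mul_assoc)
  then show "(mat 1 - X ** A) ** (mat 1 - X ** A) = mat 1 - X ** A"
    by (simp add: matrix_diff_rdistrib matrix_diff_ldistrib)
  show "transpose (mat 1 - X ** A) = mat 1 - X ** A"
    using assms unfolding penrose_def by (simp add: transpose_diff)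
qed

lemma norm_orthogonal_projection:
  fixes M :: "real^'n^'n"
  assumes "transpose M = M" and "M ** M = M"
  shows "(norm (M *v v))\<^sup>2 = (M *v v) \<bullet> v"
proof -
  have "(norm (M *v v))\<^sup>2 = v \<bullet> (transpose M *v (M *v v))"
    by (simp add: power2_norm_eq_inner inner_matrix_vector_transpose)
  also have "\<dots> = (M *v v) \<bullet> v"
    using assms by (simp add: matrix_vector_mul_assoc inner_commute)
  finally show ?thesis .
qed

lemma psd_cauchy_schwarz:
  fixes L :: "real^'n^'n"
  assumes sym: "transpose L = L" and psd: "\<forall>z. 0 \<le> z \<bullet> (L *v z)"
  shows "(x \<bullet> (L *v y))\<^sup>2 \<le> (x \<bullet> (L *v x)) * (y \<bullet> (L *v y))"
proof -
  define a b c where "a = x \<bullet> (L *v x)" and "b = x \<bullet> (L *v y)" and "c = y \<bullet> (L *v y)"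
  have yLx: "y \<bullet> (L *v x) = b"
    unfolding b_def using sym by (metis inner_commute inner_matrix_vector_transpose)
  have quad: "0 \<le> s\<^sup>2 * a - 2 * s * t * b + t\<^sup>2 * c" for s t
  proof -
    have "0 \<le> (s *\<^sub>R x - t *\<^sub>R y) \<bullet> (L *v (s *\<^sub>R x - t *\<^sub>R y))"
      using psd by blast
    also have "\<dots> = s\<^sup>2 * a - 2 * s * t * b + t\<^sup>2 * c"
      using yLx unfolding a_def b_def c_def
      by (simp add: algebra_simps power2_eq_square)
    finally show ?thesis .
  qed
  show ?thesis
  proof (cases "c = 0")
    case True
    have "b = 0"
    proof (rule ccontr)
      assume "b \<noteq> 0"
      then have "0 \<le> a - 2 * ((a + 1) / (2 * b)) * b"
        using quad[of 1 "(a + 1) / (2 * b)"] True by simp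
      with \<open>b \<noteq> 0\<close> show False
        by simp
    qed
    with True show ?thesis
      unfolding a_def b_def c_def by simp
  next
    case False
    then have "0 < c"
      using psd c_def by (metis order_le_less)
    have "0 \<le> c * (c * a - b\<^sup>2)"
      using quad[of c b] by (simp add: algebra_simps power2_eq_square)
    then show ?thesis
      using \<open>0 < c\<close> unfolding a_def b_def c_def by (simp add: zero_le_mult_iff mult.commute)
  qed
qed


theorem lemma2:
  fixes L :: "real^'N^'N" and P :: "real^'N^'n"
    and lam :: "nat \<Rightarrow> real" and u :: "nat \<Rightarrow> real^'N"
    and i :: nat and eps :: real
  assumes sym: "transpose L = L"
    and psd: "\<forall>x. 0 \<le> x \<bullet> (L *v x)"
    and eig: "\<forall>k\<in>{1..CARD('N)}. L *v u k = lam k *\<^sub>R u k"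
    and orth: "\<forall>j\<in>{1..CARD('N)}. \<forall>k\<in>{1..CARD('N)}. u j \<bullet> u k = (if j = k then 1 else 0)"
    and sorted: "\<forall>j\<in>{1..CARD('N)}. \<forall>k\<in>{1..CARD('N)}. j \<le> k \<longrightarrow> lam j \<le> lam k"
    and fullrank: "rank P = CARD('n)"
    and i: "i \<in> {1..CARD('N)}" and pos: "lam i > 0"
    and sim: "rsimilar L (transpose (pinv P) ** L ** pinv P) P (span (u ` {1..i})) eps"
  shows "(norm ((mat 1 - pinv P ** P) *v u i))\<^sup>2 \<le> eps"
proof -
  define x where "x = (mat 1 - pinv P ** P) *v u i"
  define s where "s = x \<bullet> u i"
  define a where "a = x \<bullet> (L *v x)"
  have norm_x: "(norm x)\<^sup>2 = s"
    unfolding x_def s_def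
    using penrose_complement_projection[OF penrose_full_row_rank[OF fullrank]]
    by (rule norm_orthogonal_projection)
  have Lu: "L *v u i = lam i *\<^sub>R u i" and uu: "u i \<bullet> u i = 1"
    using eig orth i by auto
  have "u i \<in> span (u ` {1..i})"
    using i by (intro span_base) auto
  then have eps: "eps \<ge> 0" and "sqrt a \<le> eps * sqrt (lam i)"
    using sim Lu uu unfolding rsimilar_def Mnorm_def x_def a_def
    by (auto simp: matrix_vector_mult_diff_rdistrib)
  moreover have "eps * sqrt (lam i) = sqrt (eps\<^sup>2 * lam i)"
    using eps by (simp add: real_sqrt_mult)
  ultimately have a_le: "a \<le> eps\<^sup>2 * lam i"
    by simp
  have "u i \<bullet> (L *v x) = lam i * s"
    using Lu sym unfolding s_def by (metis inner_commute inner_matrix_vector_transpose inner_scaleR_left)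
  then have "(lam i * s)\<^sup>2 \<le> lam i * a"
    using psd_cauchy_schwarz[OF sym psd, of "u i" x] Lu uu unfolding a_def by simp
  also have "\<dots> \<le> (lam i * eps)\<^sup>2"
    using mult_left_mono[OF a_le, of "lam i"] pos by (simp add: power2_eq_square mult_ac)
  finally have "s\<^sup>2 \<le> eps\<^sup>2"
    using pos by (simp add: power_mult_distrib)
  then show ?thesis
    using eps norm_x unfolding x_def by (metis power2_le_imp_le)
qed

end
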